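(* (1) Let $\mathbf S=(S,\vee,K)$ be a closure semilattice, and for $n\ge1$ and $a,b_1,\dots,b_n\in S$ set $a\sqsubseteq^n b_1,\dots,b_n$ iff $a\le Kb_1\vee\dots\vee Kb_n$. Then $(S,\vee,(\sqsubseteq^n)_{n\ge1})$ is a principal regular multi-argument specialization semilattice. In particular this applies when $\mathbf S$ is a closure space $(\mathcal P(X),\cup,K)$. (2) If $\mathbf T$ is another closure semilattice and $\varphi:\mathbf S\to\mathbf T$ is a homomorphism of closure semilattices (i.e. $\varphi(a\vee b)=\varphi(a)\vee\varphi(b)$ and $\varphi(Ka)=K\varphi(a)$ for all $a,b$), then $\varphi$ is a homomorphism between the associated multi-argument specialization semilattices defined as in (1).
   Context: A closure operation on a poset is extensive ($x\le Kx$), idempotent ($KKx=Kx$) and isotone. A closure semilattice is a join semilattice with a closure operation; a closure space is $(\mathcal P(X),\cup,K)$ with $K$ a closure operation on $\mathcal P(X)$. A multi-argument specialization semilattice is a join semilattice $(M,\vee)$ (order $a\le b$ iff $a\vee b=b$) with, for each $n\ge1$, an $(n+1)$-ary relation $a\sqsubseteq^n b_1,\dots,b_n$ (also written $a\sqsubseteq b_1,\dots,b_n$) such that: (M1) $a\sqsubseteq a$; (M2) $a\sqsubseteq b_1,\dots,b_n$ and $b_1\sqsubseteq c$ imply $a\sqsubseteq c,b_2,\dots,b_n$; (M3) $a\le b$ and $b\sqsubseteq c_1,\dots,c_m$ imply $a\sqsubseteq c_1,\dots,c_m$; (M4) $a\sqsubseteq b_1,\dots,b_n$ implies $a\sqsubseteq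 b_{\sigma1},\dots,b_{\sigma n}$ for every permutation $\sigma$; (M5) $a\sqsubseteq b_1,\dots,b_n,b_n$ implies $a\sqsubseteq b_1,\dots,b_n$; (M6) $a\sqsubseteq b_1,\dots,b_n$ implies $a\sqsubseteq b_1,\dots,b_n,b_{n+1}$; (M7) $a\sqsubseteq b_1,\dots,b_n$ and $a_1\sqsubseteq b_1,\dots,b_n$ imply $a\vee a_1\sqsubseteq b_1,\dots,b_n$. It is principal if for every $x$ there is a $\le$-largest $y$ with $y\sqsubseteq^1 x$; this $y$ is denoted $Kx$. A principal one is regular if $a\sqsubseteq^n b_1,\dots,b_n$ holds iff $a\le Kb_1\vee\dots\vee Kb_n$, for all $n$ and elements. A homomorphism of multi-argument specialization semilattices is a join-preserving map $\varphi$ such that $a\sqsubseteq^n b_1,\dots,b_n$ implies $\varphi(a)\sqsubseteq^n\varphi(b_1),\dots,\varphi(b_n)$ for all $n$. *)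

theory Defs
  imports "HOL-Combinatorics.Permutations"
begin

text \<open>An (n+1)-ary relation a \<sqsubseteq>^n b1,...,bn is rendered
  as a predicate on an element and a NONEMPTY list [b1,...,bn] of length n.\<close>

definition closure_op :: "('a::order \<Rightarrow> 'a) \<Rightarrow> bool" where
  "closure_op K \<longleftrightarrow> (\<forall>x. x \<le> K x) \<and> (\<forall>x. K (K x) = K x) \<and> mono K"

fun list_join :: "'a::semilattice_sup list \<Rightarrow> 'a" where
  "list_join [] = undefined"
| "list_join [x] = x"
| "list_join (x # y # ys) = sup x (list_join (y # ys))"

definition msl :: "('a::semilattice_sup \<Rightarrow> 'a list \<Rightarrow> bool) \<Rightarrow> bool" where
  "msl sq \<longleftrightarrow>
     (\<forall>a. sq a [a]) \<and>
     (\<forall>a b bs c. sq a (b # bs) \<and> sq b [c] \<longrightarrow> sq a (c # bs)) \<and>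
     (\<forall>a b cs. cs \<noteq> [] \<and> a \<le> b \<and> sq b cs \<longrightarrow> sq a cs) \<and>
     (\<forall>a bs \<sigma>. bs \<noteq> [] \<and> sq a bs \<and> \<sigma> permutes {..<length bs} \<longrightarrow>
         sq a (map (\<lambda>i. bs ! \<sigma> i) [0..<length bs])) \<and>
     (\<forall>a bs b. sq a (bs @ [b, b]) \<longrightarrow> sq a (bs @ [b])) \<and>
     (\<forall>a bs b. bs \<noteq> [] \<and> sq a bs \<longrightarrow> sq a (bs @ [b])) \<and>
     (\<forall>a a1 bs. bs \<noteq> [] \<and> sq a bs \<and> sq a1 bs \<longrightarrow> sq (sup a a1) bs)"

definition msl_principal :: "('a::semilattice_sup \<Rightarrow> 'a list \<Rightarrow> bool) \<Rightarrow> bool" where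
  "msl_principal sq \<longleftrightarrow> msl sq \<and> (\<forall>x. \<exists>y. sq y [x] \<and> (\<forall>z. sq z [x] \<longrightarrow> z \<le> y))"

definition msl_K :: "('a::semilattice_sup \<Rightarrow> 'a list \<Rightarrow> bool) \<Rightarrow> 'a \<Rightarrow> 'a" where
  "msl_K sq x = (GREATEST y. sq y [x])"

definition msl_regular :: "('a::semilattice_sup \<Rightarrow> 'a list \<Rightarrow> bool) \<Rightarrow> bool" where
  "msl_regular sq \<longleftrightarrow> msl_principal sq \<and>
     (\<forall>a bs. bs \<noteq> [] \<longrightarrow> (sq a bs \<longleftrightarrow> a \<le> list_join (map (msl_K sq) bs)))"

definition msl_hom :: "('a::semilattice_sup \<Rightarrow> 'b::semilattice_sup) \<Rightarrow>
    ('a \<Rightarrow> 'a list \<Rightarrow> bool) \<Rightarrow> ('b \<Rightarrow> 'b list \<Rightarrow> bool) \<Rightarrow> bool" where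
  "msl_hom \<phi> sqS sqT \<longleftrightarrow> (\<forall>a b. \<phi> (sup a b) = sup (\<phi> a) (\<phi> b)) \<and>
     (\<forall>a bs. bs \<noteq> [] \<and> sqS a bs \<longrightarrow> sqT (\<phi> a) (map \<phi> bs))"

definition ind_sq :: "('a::semilattice_sup \<Rightarrow> 'a) \<Rightarrow> 'a \<Rightarrow> 'a list \<Rightarrow> bool" where
  "ind_sq K a bs \<longleftrightarrow> bs \<noteq> [] \<and> a \<le> list_join (map K bs)"

end

theory Submission
  imports Defs
begin

text \<open>Since \<open>a \<sqsubseteq> b\<^sub>1,\<dots>,b\<^sub>n\<close> is defined as \<open>a \<le> K b\<^sub>1 \<squnion> \<dots> \<squnion> K b\<^sub>n\<close>, it only depends on the
  set of closures \<open>K b\<^sub>i\<close> up to domination, and \<open>b \<le> K c\<close> is equivalent to \<open>K b \<le> K c\<close>. This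
  makes axioms (M2) and (M4)--(M6) instances of a single weakening rule, (M1), (M3) and (M7) are
  immediate, and the largest \<open>y\<close> with \<open>y \<sqsubseteq> x\<close> is \<open>K x\<close>, which gives principality and
  regularity. A join-preserving map commuting with the closures preserves joins of closures,
  hence the induced relations.\<close>

lemma list_join_le_iff: "bs \<noteq> [] \<Longrightarrow> list_join bs \<le> z \<longleftrightarrow> (\<forall>b\<in>set bs. b \<le> z)"
  by (induction bs rule: list_join.induct) auto

lemma le_list_join: "b \<in> set bs \<Longrightarrow> b \<le> list_join bs"
  by (metis empty_iff list_join_le_iff order_refl set_empty)

lemma list_join_mono:
  assumes "bs \<noteq> []" and "\<forall>b\<in>set bs. \<exists>c\<in>set cs. b \<le> c"
  shows "list_join bs \<le> list_join cs"
  using assms by (meson le_list_join list_join_le_iff order_trans)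

lemma list_join_map_hom:
  assumes "\<forall>a b. \<phi> (sup a b) = sup (\<phi> a) (\<phi> b)" and "bs \<noteq> []"
  shows "\<phi> (list_join bs) = list_join (map \<phi> bs)"
  using assms by (induction bs rule: list_join.induct) auto

lemma closure_op_le_closure_iff:
  assumes "closure_op K"
  shows "b \<le> K c \<longleftrightarrow> K b \<le> K c"
  using assms unfolding closure_op_def mono_def by (metis order_trans)

lemma ind_sq_singleton: "ind_sq K a [b] \<longleftrightarrow> a \<le> K b"
  by (simp add: ind_sq_def)

lemma ind_sq_weaken:
  assumes "ind_sq K a bs" and "cs \<noteq> []" and "\<forall>b\<in>set bs. \<exists>c\<in>set cs. K b \<le> K c"
  shows "ind_sq K a cs"
proof -
  have "list_join (map K bs) \<le> list_join (map K cs)"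
    using assms(1,3) unfolding ind_sq_def by (intro list_join_mono) auto
  then show ?thesis
    using assms(1,2) unfolding ind_sq_def by (auto intro: order_trans)
qed

lemma msl_ind_sq:
  assumes "closure_op K"
  shows "msl (ind_sq K)"
  unfolding msl_def
proof (intro conjI allI impI; (elim conjE)?)
  show "ind_sq K a [a]" for a
    using assms by (simp add: ind_sq_singleton closure_op_def)
  show "ind_sq K a (c # bs)" if "ind_sq K a (b # bs)" and "ind_sq K b [c]" for a b bs c
  proof -
    have "K b \<le> K c"
      using that(2) closure_op_le_closure_iff[OF assms] by (simp add: ind_sq_singleton)
    show ?thesis
      by (rule ind_sq_weaken[OF that(1)]) (use \<open>K b \<le> K c\<close> in auto)
  qed
  show "ind_sq K a cs" if "a \<le> b" and "ind_sq K b cs" for a b cs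
    using that unfolding ind_sq_def by (auto intro: order_trans)
  show "ind_sq K a (map (\<lambda>i. bs ! \<sigma> i) [0..<length bs])"
    if "bs \<noteq> []" and "ind_sq K a bs" and "\<sigma> permutes {..<length bs}" for a bs \<sigma>
  proof -
    have same_set: "set (map (\<lambda>i. bs ! \<sigma> i) [0..<length bs]) = set bs"
      using set_permute_list[OF that(3)] unfolding permute_list_def .
    show ?thesis
      by (rule ind_sq_weaken[OF that(2)]) (use that(1) same_set in auto)
  qed
  show "ind_sq K a (bs @ [b])" if "ind_sq K a (bs @ [b, b])" for a bs b
    using that by (rule ind_sq_weaken) auto
  show "ind_sq K a (bs @ [b])" if "ind_sq K a bs" for a bs b
    using that by (rule ind_sq_weaken) auto
  show "ind_sq K (sup a a1) bs" if "ind_sq K a bs" and "ind_sq K a1 bs" for a a1 bs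
    using that by (simp add: ind_sq_def)
qed

lemma msl_K_ind_sq: "msl_K (ind_sq K) = K"
  unfolding msl_K_def ind_sq_def by (rule ext, rule Greatest_equality) auto

lemma msl_regular_ind_sq:
  assumes "closure_op K"
  shows "msl_regular (ind_sq K)"
  unfolding msl_regular_def msl_principal_def msl_K_ind_sq
  using msl_ind_sq[OF assms] by (auto simp: ind_sq_def)

lemma msl_hom_ind_sq:
  assumes sup_hom: "\<forall>a b. \<phi> (sup a b) = sup (\<phi> a) (\<phi> b)"
    and closure_hom: "\<forall>a. \<phi> (K a) = L (\<phi> a)"
  shows "msl_hom \<phi> (ind_sq K) (ind_sq L)"
  unfolding msl_hom_def
proof (intro conjI allI impI; (elim conjE)?)
  show "\<phi> (sup a b) = sup (\<phi> a) (\<phi> b)" for a b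
    using sup_hom by blast
  show "ind_sq L (\<phi> a) (map \<phi> bs)" if "bs \<noteq> []" and "ind_sq K a bs" for a bs
  proof -
    have "\<phi> a \<le> \<phi> (list_join (map K bs))"
      using that(2) sup_hom unfolding ind_sq_def by (metis le_iff_sup)
    also have "\<dots> = list_join (map L (map \<phi> bs))"
      using that(1) closure_hom by (simp add: list_join_map_hom[OF sup_hom] comp_def)
    finally show ?thesis
      using that(1) unfolding ind_sq_def by simp
  qed
qed

theorem proposition3p3:
  fixes K :: "'a::semilattice_sup \<Rightarrow> 'a" and L :: "'b::semilattice_sup \<Rightarrow> 'b"
    and \<phi> :: "'a \<Rightarrow> 'b" and C :: "'x set \<Rightarrow> 'x set"
  shows "(closure_op K \<longrightarrow> msl_regular (ind_sq K))
    \<and> (closure_op C \<longrightarrow> msl_regular (ind_sq C))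
    \<and> (closure_op K \<and> closure_op L \<and> (\<forall>a b. \<phi> (sup a b) = sup (\<phi> a) (\<phi> b))
         \<and> (\<forall>a. \<phi> (K a) = L (\<phi> a))
       \<longrightarrow> msl_hom \<phi> (ind_sq K) (ind_sq L))"
proof (intro conjI impI)
  show "msl_regular (ind_sq K)" if "closure_op K"
    using that by (rule msl_regular_ind_sq)
  show "msl_regular (ind_sq C)" if "closure_op C"
    using that by (rule msl_regular_ind_sq)
  show "msl_hom \<phi> (ind_sq K) (ind_sq L)"
    if "closure_op K \<and> closure_op L \<and> (\<forall>a b. \<phi> (sup a b) = sup (\<phi> a) (\<phi> b))
      \<and> (\<forall>a. \<phi> (K a) = L (\<phi> a))"
    using that by (intro msl_hom_ind_sq) auto
qed

end
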